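(* Let $T\in\mathcal{B}(\mathbb{C}^d)$ be power bounded. Then the limit $A_{T,C}:=\lim_{n\to\infty}\frac1n\sum_{j=1}^nT^{*j}T^j$ exists (in norm), and $A_{T,L}=A_{T,C}$ for every Banach limit $L$. Conversely, if the sequence $\frac1n\sum_{j=1}^nT^{*j}T^j$ converges for a matrix $T$, then $T$ is power bounded.
   Context: $T$ is power bounded if $\sup_n\|T^n\|<\infty$. A Banach limit is a linear functional $L$ on $\ell^\infty(\mathbb{N})$, written $\operatorname{L-lim}$, with $\|L\|=1$, agreeing with the ordinary limit on convergent sequences, positive, and shift-invariant ($\operatorname{L-lim}x_n=\operatorname{L-lim}x_{n+1}$). For power bounded $T$, $A_{T,L}$ is the positive operator with $\langle A_{T,L}x,y\rangle=\operatorname{L-lim}_n\langle T^{*n}T^nx,y\rangle$. *)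

theory Defs
  imports "HOL-Analysis.Analysis"
begin

text \<open>Operators on C^d are d x d complex matrices, with the index type 'n finite (d = CARD('n)).\<close>

primrec matpow :: "'a::comm_ring_1 ^'n^'n \<Rightarrow> nat \<Rightarrow> 'a ^'n^'n" where
  "matpow T 0 = mat 1"
| "matpow T (Suc k) = T ** matpow T k"

definition adj :: "complex ^'n^'m \<Rightarrow> complex ^'m^'n" where
  "adj T = (\<chi> i j. cnj (T $ j $ i))"

definition cinner :: "complex ^'n \<Rightarrow> complex ^'n \<Rightarrow> complex" where
  "cinner x y = (\<Sum>i\<in>UNIV. x $ i * cnj (y $ i))"

definition power_bounded :: "complex ^'n^'n \<Rightarrow> bool" where
  "power_bounded T \<longleftrightarrow> bdd_above (range (\<lambda>k. onorm (\<lambda>x. matpow T k *v x)))"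

definition cesaro :: "complex ^'n^'n \<Rightarrow> nat \<Rightarrow> complex ^'n^'n" where
  "cesaro T n = (1 / of_nat n) *\<^sub>R (\<Sum>j=1..n. adj (matpow T j) ** matpow T j)"

text \<open>Banach limits on the complex space l^\<infinity>(N); L is only constrained on bounded sequences.\<close>
definition banach_limit :: "((nat \<Rightarrow> complex) \<Rightarrow> complex) \<Rightarrow> bool" where
  "banach_limit L \<longleftrightarrow>
     (\<forall>x y a b. bounded (range x) \<longrightarrow> bounded (range y) \<longrightarrow>
         L (\<lambda>n. a * x n + b * y n) = a * L x + b * L y)
   \<and> (\<forall>x. bounded (range x) \<longrightarrow> norm (L x) \<le> (SUP n. norm (x n)))
   \<and> (\<exists>x. bounded (range x) \<and> (SUP n. norm (x n)) \<le> 1 \<and> norm (L x) = 1)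
   \<and> (\<forall>x. convergent x \<longrightarrow> L x = lim x)
   \<and> (\<forall>x. bounded (range x) \<longrightarrow> (\<forall>n. x n \<in> \<real> \<and> 0 \<le> Re (x n)) \<longrightarrow> L x \<in> \<real> \<and> 0 \<le> Re (L x))
   \<and> (\<forall>x. bounded (range x) \<longrightarrow> L (\<lambda>n. x (Suc n)) = L x)"

end

theory Submission
  imports Defs
begin

text \<open>
  Let Phi X = T* X T, so that T*^n T^n = Phi^n I and the averages in the statement are the
  Cesaro means of the orbit of I under Phi. If T is power bounded, Phi has bounded orbits on
  the finite-dimensional space of matrices, and the mean ergodic argument splits
  I = A + (Phi W - W) with Phi A = A. Hence Phi^n I = A + (Phi^(n+1) W - Phi^n W): the means
  converge to A, and a Banach limit, being shift invariant, kills the bounded telescoping part.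

  Conversely, if the means converge to A then Phi A = A, so Q y = Re <A y, y> is T-invariant.
  The quadratic forms of the means converge to Q uniformly on the unit sphere, so for some m
  the average of |T^j y|^2 over 1 <= j <= m is at most |y|^2/2 + Q y. Along any orbit the
  squared norm therefore falls to at most half its value plus Q x within every m steps,
  which bounds it by a multiple of |x|^2.
\<close>

section \<open>Cesaro means of a linear map\<close>

lemma linear_funpow:
  fixes \<Phi> :: "'v::real_vector \<Rightarrow> 'v"
  assumes "linear \<Phi>"
  shows "linear (\<Phi> ^^ n)"
proof (induction n)
  case 0
  show ?case by (simp add: linear_id[unfolded id_def])
next
  case (Suc n)
  then show ?case by (metis funpow.simps(2) linear_compose assms)
qed

lemma scaleR_one_over_n_tendsto_zero:
  fixes s :: "nat \<Rightarrow> 'a::real_normed_vector"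
  assumes "bounded (range s)"
  shows "(\<lambda>n. (1 / real n) *\<^sub>R s n) \<longlonglongrightarrow> 0"
proof -
  have "Zfun (\<lambda>n. 1 / real n) sequentially"
    using tendsto_Zfun_iff[THEN iffD1, OF lim_1_over_n[where 'a=real]] by (simp only: diff_zero)
  moreover have "Bfun s sequentially"
    using assms by (simp only: Bseq_eq_bounded)
  ultimately have "Zfun (\<lambda>n. (1 / real n) *\<^sub>R s n) sequentially"
    by (rule bounded_bilinear.Zfun_prod_Bfun[OF bounded_bilinear_scaleR])
  then show ?thesis
    by (simp only: tendsto_Zfun_iff diff_zero)
qed

definition cesaro_mean :: "('v::real_vector \<Rightarrow> 'v) \<Rightarrow> 'v \<Rightarrow> nat \<Rightarrow> 'v" where
  "cesaro_mean \<Phi> e n = (1 / real n) *\<^sub>R (\<Sum>j=1..n. (\<Phi> ^^ j) e)"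

lemma scaleR_cesaro_mean: "real n *\<^sub>R cesaro_mean \<Phi> e n = (\<Sum>j=1..n. (\<Phi> ^^ j) e)"
  by (cases "n = 0") (simp_all add: cesaro_mean_def)

lemma cesaro_mean_Suc_diff:
  "real (Suc n) *\<^sub>R cesaro_mean \<Phi> e (Suc n) - real n *\<^sub>R cesaro_mean \<Phi> e n = (\<Phi> ^^ Suc n) e"
  unfolding scaleR_cesaro_mean by simp

lemma cesaro_mean_defect:
  assumes "linear \<Phi>"
  shows "\<Phi> (cesaro_mean \<Phi> e n) - cesaro_mean \<Phi> e n = (1 / real n) *\<^sub>R ((\<Phi> ^^ Suc n) e - \<Phi> e)"
proof -
  have "\<Phi> (\<Sum>j=1..n. (\<Phi> ^^ j) e) = (\<Sum>j=1..n. (\<Phi> ^^ Suc j) e)"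
    by (simp add: linear_sum[OF assms])
  also have "\<dots> = (\<Sum>j=1..n. (\<Phi> ^^ j) e) + ((\<Phi> ^^ Suc n) e - \<Phi> e)"
    using sum_Suc_diff[of 1 n "\<lambda>j. (\<Phi> ^^ j) e"] by (simp add: sum_subtractf algebra_simps)
  finally show ?thesis
    by (simp add: cesaro_mean_def linear_scale[OF assms] scaleR_diff_right scaleR_add_right)
qed

lemma cesaro_mean_cluster_point_fixed:
  assumes "bounded_linear \<Phi>"
    and growth: "(\<lambda>n. (1 / real n) *\<^sub>R (\<Phi> ^^ Suc n) e) \<longlonglongrightarrow> 0"
    and "strict_mono r" and lim: "(\<lambda>k. cesaro_mean \<Phi> e (r k)) \<longlonglongrightarrow> u"
  shows "\<Phi> u = u"
proof -
  have lin: "linear \<Phi>"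
    using assms(1) by (rule bounded_linear.linear)
  have "(\<lambda>n. (1 / real n) *\<^sub>R (\<Phi> ^^ Suc n) e - (1 / real n) *\<^sub>R \<Phi> e) \<longlonglongrightarrow> 0 - 0"
    by (intro tendsto_diff growth scaleR_one_over_n_tendsto_zero) simp
  then have "(\<lambda>n. \<Phi> (cesaro_mean \<Phi> e n) - cesaro_mean \<Phi> e n) \<longlonglongrightarrow> 0"
    by (simp add: cesaro_mean_defect[OF lin] scaleR_diff_right)
  then have "(\<lambda>k. \<Phi> (cesaro_mean \<Phi> e (r k)) - cesaro_mean \<Phi> e (r k)) \<longlonglongrightarrow> 0"
    using LIMSEQ_subseq_LIMSEQ[OF _ \<open>strict_mono r\<close>] by (simp add: o_def)
  moreover have "(\<lambda>k. \<Phi> (cesaro_mean \<Phi> e (r k)) - cesaro_mean \<Phi> e (r k)) \<longlonglongrightarrow> \<Phi> u - u"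
    by (intro tendsto_diff bounded_linear.tendsto[OF assms(1)] lim)
  ultimately show ?thesis
    using LIMSEQ_unique by fastforce
qed

lemma cesaro_mean_tendsto_imp_orbit_over_n_tendsto_zero:
  fixes \<Phi> :: "'v::real_normed_vector \<Rightarrow> 'v"
  assumes "cesaro_mean \<Phi> e \<longlonglongrightarrow> u"
  shows "(\<lambda>n. (1 / real n) *\<^sub>R (\<Phi> ^^ Suc n) e) \<longlonglongrightarrow> 0"
proof -
  have shifted: "(\<lambda>n. cesaro_mean \<Phi> e (Suc n)) \<longlonglongrightarrow> u"
    using assms by (rule LIMSEQ_Suc)
  have "(\<lambda>n. (real (Suc n) / real n) *\<^sub>R cesaro_mean \<Phi> e (Suc n) - cesaro_mean \<Phi> e n)
          \<longlonglongrightarrow> 0"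
    using tendsto_diff[OF tendsto_scaleR[OF LIMSEQ_Suc_n_over_n shifted] assms] by simp
  moreover have "\<forall>\<^sub>F n in sequentially.
      (real (Suc n) / real n) *\<^sub>R cesaro_mean \<Phi> e (Suc n) - cesaro_mean \<Phi> e n
      = (1 / real n) *\<^sub>R (\<Phi> ^^ Suc n) e"
    using eventually_ge_at_top[of 1]
  proof eventually_elim
    case (elim n)
    then have "(real (Suc n) / real n) *\<^sub>R cesaro_mean \<Phi> e (Suc n) - cesaro_mean \<Phi> e n
        = (1 / real n) *\<^sub>R (real (Suc n) *\<^sub>R cesaro_mean \<Phi> e (Suc n) - real n *\<^sub>R cesaro_mean \<Phi> e n)"
      by (simp add: scaleR_diff_right)
    then show ?case
      by (simp only: cesaro_mean_Suc_diff)
  qed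
  ultimately show ?thesis
    by (rule Lim_transform_eventually)
qed

lemma bounded_range_Suc:
  assumes "bounded (range f)"
  shows "bounded (range (\<lambda>n. f (Suc n)))"
  by (rule bounded_subset[OF assms]) auto

lemma cesaro_mean_norm_le:
  assumes "\<And>j. norm ((\<Phi> ^^ j) e) \<le> b"
  shows "norm (cesaro_mean \<Phi> e n) \<le> b"
proof (cases "n = 0")
  case True
  then show ?thesis
    using order_trans[OF norm_ge_zero assms[of 0]] by (simp add: cesaro_mean_def)
next
  case False
  have "norm (\<Sum>j=1..n. (\<Phi> ^^ j) e) \<le> real n * b"
    using norm_sum[of "\<lambda>j. (\<Phi> ^^ j) e" "{1..n}"] sum_mono[of "{1..n}" "\<lambda>j. norm ((\<Phi> ^^ j) e)" "\<lambda>_. b"] assms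
    by simp
  then show ?thesis
    using False by (simp add: cesaro_mean_def divide_simps mult.commute)
qed

lemma funpow_diff_in_range_diff:
  assumes "linear \<Phi>"
  shows "(\<Phi> ^^ j) e - e \<in> range (\<lambda>w. \<Phi> w - w)"
proof
  show "(\<Phi> ^^ j) e - e = \<Phi> (\<Sum>k<j. (\<Phi> ^^ k) e) - (\<Sum>k<j. (\<Phi> ^^ k) e)"
    using sum_lessThan_telescope[of "\<lambda>k. (\<Phi> ^^ k) e" j]
    by (simp add: linear_sum[OF assms] sum_subtractf)
qed simp

lemma funpow_fixed_plus_coboundary:
  assumes "linear \<Phi>" and "\<Phi> u = u"
  shows "(\<Phi> ^^ n) (u + (\<Phi> w - w)) = u + ((\<Phi> ^^ Suc n) w - (\<Phi> ^^ n) w)"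
proof -
  have fixed: "(\<Phi> ^^ j) u = u" for j
    by (induction j) (simp_all add: assms(2))
  show ?thesis
    using linear_funpow[OF assms(1)]
    by (simp add: linear_add linear_diff fixed funpow_swap1)
qed

lemma scaleR_cesaro_mean_coboundary:
  assumes "linear \<Phi>" and "\<Phi> u = u"
  shows "real n *\<^sub>R cesaro_mean \<Phi> (u + (\<Phi> w - w)) n = real n *\<^sub>R u + ((\<Phi> ^^ Suc n) w - \<Phi> w)"
  using sum_Suc_diff[of 1 n "\<lambda>j. (\<Phi> ^^ j) w"]
  by (simp add: scaleR_cesaro_mean funpow_fixed_plus_coboundary[OF assms] sum.distrib sum_constant_scaleR)

lemma cesaro_mean_coboundary_tendsto:
  fixes \<Phi> :: "'v::real_normed_vector \<Rightarrow> 'v"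
  assumes "linear \<Phi>" and "\<Phi> u = u" and orbit: "bounded (range (\<lambda>n. (\<Phi> ^^ n) w))"
  shows "cesaro_mean \<Phi> (u + (\<Phi> w - w)) \<longlonglongrightarrow> u"
proof -
  have "bounded (range (\<lambda>n. (\<Phi> ^^ Suc n) w))"
    using bounded_range_Suc[OF orbit] .
  then have "(\<lambda>n. u + ((1 / real n) *\<^sub>R (\<Phi> ^^ Suc n) w - (1 / real n) *\<^sub>R \<Phi> w)) \<longlonglongrightarrow> u + (0 - 0)"
    by (intro tendsto_add tendsto_diff tendsto_const scaleR_one_over_n_tendsto_zero)
      (auto simp: bounded_iff)
  moreover have "\<forall>\<^sub>F n in sequentially.
      u + ((1 / real n) *\<^sub>R (\<Phi> ^^ Suc n) w - (1 / real n) *\<^sub>R \<Phi> w) = cesaro_mean \<Phi> (u + (\<Phi> w - w)) n"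
    using eventually_ge_at_top[of 1]
  proof eventually_elim
    case (elim n)
    then show ?case
      using arg_cong[OF scaleR_cesaro_mean_coboundary[OF assms(1,2), of n w], of "scaleR (1 / real n)"]
      by (simp add: scaleR_add_right scaleR_diff_right)
  qed
  ultimately show ?thesis
    by (simp add: Lim_transform_eventually)
qed

text \<open>
  A cluster point u of the Cesaro means is fixed, and e - u lies in the closed subspace
  range (\<Phi> - id), which contains every e - cesaro_mean \<Phi> e n with n \<ge> 1.
\<close>
lemma mean_ergodic_decomposition:
  fixes \<Phi> :: "'v::euclidean_space \<Rightarrow> 'v"
  assumes lin: "linear \<Phi>" and orbit: "bounded (range (\<lambda>n. (\<Phi> ^^ n) e))"
  obtains u w where "\<Phi> u = u" and "e = u + (\<Phi> w - w)"
proof -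
  obtain b where "\<And>n. norm ((\<Phi> ^^ n) e) \<le> b"
    using orbit by (auto simp: bounded_iff)
  then have "bounded (range (cesaro_mean \<Phi> e))"
    by (auto simp: bounded_iff intro: cesaro_mean_norm_le)
  then obtain u r where r: "strict_mono r" and lim: "(cesaro_mean \<Phi> e \<circ> r) \<longlonglongrightarrow> u"
    using bounded_imp_convergent_subsequence by blast
  have "bounded (range (\<lambda>n. (\<Phi> ^^ Suc n) e))"
    using bounded_range_Suc[OF orbit] .
  then have "\<Phi> u = u"
    using lin lim r
    by (intro cesaro_mean_cluster_point_fixed[of \<Phi> e r])
      (simp_all add: linear_conv_bounded_linear scaleR_one_over_n_tendsto_zero o_def)
  define R where "R = range (\<lambda>w. \<Phi> w - w)"
  have R: "subspace R"
    unfolding R_def using linear_compose_sub[OF lin linear_id[unfolded id_def]]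
    by (rule linear_subspace_image[OF _ subspace_UNIV])
  have mean_in_R: "e - cesaro_mean \<Phi> e n \<in> R" if "n \<ge> 1" for n
  proof -
    have "e - cesaro_mean \<Phi> e n = - ((1 / real n) *\<^sub>R (\<Sum>j=1..n. (\<Phi> ^^ j) e - e))"
      using that by (simp add: cesaro_mean_def sum_subtractf scaleR_diff_right sum_constant_scaleR)
    also have "\<dots> \<in> R"
      unfolding R_def using funpow_diff_in_range_diff[OF lin] R[unfolded R_def]
      by (intro subspace_neg subspace_scale subspace_sum) auto
    finally show ?thesis .
  qed
  have "e - u \<in> R"
  proof (rule Lim_in_closed_set[OF closed_subspace[OF R]])
    show "\<forall>\<^sub>F k in sequentially. e - cesaro_mean \<Phi> e (r k) \<in> R"
      using eventually_ge_at_top[of 1]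
    proof eventually_elim
      case (elim k)
      then show ?case
        using seq_suble[OF r, of k] by (intro mean_in_R) simp
    qed
    show "(\<lambda>k. e - cesaro_mean \<Phi> e (r k)) \<longlonglongrightarrow> e - u"
      using lim by (intro tendsto_diff tendsto_const) (simp add: o_def)
  qed simp
  then obtain w where "e - u = \<Phi> w - w"
    by (auto simp: R_def)
  then show ?thesis
    using that \<open>\<Phi> u = u\<close> by (metis add_diff_cancel_left' diff_add_cancel)
qed

section \<open>Matrix algebra\<close>

lemma matpow_Suc_right: "matpow T (Suc n) = matpow T n ** T"
  by (induction n) (simp_all add: matrix_mul_assoc)

lemma matpow_add: "matpow T (j + k) = matpow T j ** matpow T k"
  by (induction j) (simp_all add: matrix_mul_assoc)

lemma adj_matrix_matrix_mult: "adj (A ** B) = adj B ** adj (A :: complex^'n^'m)"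
  by (simp add: adj_def matrix_matrix_mult_def vec_eq_iff mult.commute)

lemma adj_mat_1 [simp]: "adj (mat 1 :: complex^'n^'n) = mat 1"
  by (simp add: adj_def mat_def vec_eq_iff)

lemma bounded_bilinear_matrix_matrix_mult:
  "bounded_bilinear (\<lambda>(A::complex^'n^'m) (B::complex^'p^'n). A ** B)"
  unfolding bilinear_conv_bounded_bilinear[symmetric] bilinear_def linear_iff
  by (simp add: matrix_matrix_mult_def vec_eq_iff sum.distrib algebra_simps scaleR_sum_right)

lemma bounded_bilinear_matrix_vector_mult:
  "bounded_bilinear (\<lambda>(A::complex^'n^'m) (x::complex^'n). A *v x)"
  unfolding bilinear_conv_bounded_bilinear[symmetric] bilinear_def linear_iff
  by (simp add: matrix_vector_mult_def vec_eq_iff sum.distrib algebra_simps scaleR_sum_right)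

lemma bounded_bilinear_cinner: "bounded_bilinear (cinner :: complex^'n \<Rightarrow> _)"
  unfolding bilinear_conv_bounded_bilinear[symmetric] bilinear_def linear_iff
  by (simp add: cinner_def sum.distrib algebra_simps scaleR_sum_right)

lemma bounded_linear_adj: "bounded_linear (adj :: complex^'n^'m \<Rightarrow> _)"
  unfolding linear_conv_bounded_linear[symmetric] linear_iff
  by (simp add: adj_def vec_eq_iff)

lemma bounded_bilinear_bounded_range:
  assumes "bounded_bilinear f" and "bounded (range a)" and "bounded (range b)"
  shows "bounded (range (\<lambda>n. f (a n) (b n)))"
proof -
  obtain K where "K > 0" and K: "\<And>x y. norm (f x y) \<le> norm x * norm y * K"
    using bounded_bilinear.pos_bounded[OF assms(1)] by blast
  obtain A B where A: "\<And>n. norm (a n) \<le> A" and B: "\<And>n. norm (b n) \<le> B"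
    using assms(2,3) by (auto simp: bounded_iff)
  have "norm (f (a n) (b n)) \<le> A * B * K" for n
  proof -
    have "norm (a n) * norm (b n) \<le> A * B"
      using A B order_trans[OF norm_ge_zero A] by (intro mult_mono) auto
    then show ?thesis
      using K[of "a n" "b n"] \<open>K > 0\<close> by (meson mult_right_mono less_imp_le order_trans)
  qed
  then show ?thesis
    by (auto simp: bounded_iff)
qed

lemma norm_le_sum_norm_nth: "norm (x::'a::real_normed_vector^'n) \<le> (\<Sum>i\<in>UNIV. norm (x $ i))"
  unfolding norm_vec_def by (rule L2_set_le_sum) simp

lemma norm_matrix_nth_le_onorm: "norm (M $ i $ j) \<le> onorm (\<lambda>x. (M::complex^'n^'m) *v x)"
proof -
  have "M $ i $ j = (M *v axis j 1) $ i"
    by (simp add: matrix_vector_mult_def axis_def if_distrib if_distribR cong: if_cong)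
  then have "norm (M $ i $ j) \<le> norm (M *v axis j 1)"
    using Finite_Cartesian_Product.norm_nth_le[of "M *v axis j 1" i] by simp
  also have "\<dots> \<le> onorm (\<lambda>x. M *v x) * norm (axis j (1::complex))"
    by (rule onorm[OF matrix_vector_mul_bounded_linear])
  finally show ?thesis
    by (simp add: norm_axis_1)
qed

section \<open>Power bounded matrices\<close>

definition congruence :: "complex^'n^'n \<Rightarrow> complex^'n^'n \<Rightarrow> complex^'n^'n" where
  "congruence T X = adj T ** X ** T"

lemma funpow_congruence: "(congruence T ^^ n) X = adj (matpow T n) ** X ** matpow T n"
proof (induction n)
  case (Suc n)
  then show ?case
    by (simp only: funpow.simps(2) o_apply congruence_def matpow_Suc_right
        adj_matrix_matrix_mult matrix_mul_assoc)
qed simp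

lemma bounded_linear_congruence: "bounded_linear (congruence T)"
  unfolding congruence_def
  by (rule bounded_linear_compose[OF bounded_bilinear.bounded_linear_left[OF bounded_bilinear_matrix_matrix_mult]
        bounded_bilinear.bounded_linear_right[OF bounded_bilinear_matrix_matrix_mult]])

lemma cesaro_eq_cesaro_mean: "cesaro T = cesaro_mean (congruence T) (mat 1)"
  by (simp add: fun_eq_iff cesaro_def cesaro_mean_def funpow_congruence)

lemma bounded_range_matpow:
  fixes T :: "complex^'n^'n"
  assumes "power_bounded T"
  shows "bounded (range (matpow T))"
proof -
  obtain M where M: "\<And>k. onorm (\<lambda>x. matpow T k *v x) \<le> M"
    using assms unfolding power_bounded_def bdd_above_def by auto
  have "norm (matpow T k) \<le> (\<Sum>i\<in>(UNIV::'n set). \<Sum>j\<in>(UNIV::'n set). M)" for k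
  proof -
    have "norm (matpow T k) \<le> (\<Sum>i\<in>UNIV. norm (matpow T k $ i))"
      by (rule norm_le_sum_norm_nth)
    also have "\<dots> \<le> (\<Sum>i\<in>UNIV. \<Sum>j\<in>UNIV. norm (matpow T k $ i $ j))"
      by (intro sum_mono norm_le_sum_norm_nth)
    also have "\<dots> \<le> (\<Sum>i\<in>(UNIV::'n set). \<Sum>j\<in>(UNIV::'n set). M)"
      by (intro sum_mono order_trans[OF norm_matrix_nth_le_onorm M])
    finally show ?thesis .
  qed
  then show ?thesis
    by (auto simp: bounded_iff)
qed

lemma bounded_orbit_congruence:
  assumes "power_bounded T"
  shows "bounded (range (\<lambda>n. (congruence T ^^ n) X))"
proof -
  have "bounded (range (\<lambda>n. adj (matpow T n)))"
    using bounded_linear_image[OF bounded_range_matpow[OF assms] bounded_linear_adj]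
    by (simp add: image_image)
  then have "bounded (range (\<lambda>n. adj (matpow T n) ** X))"
    by (rule bounded_bilinear_bounded_range[OF bounded_bilinear_matrix_matrix_mult])
      (rule boundedI[of _ "norm X"], auto)
  then show ?thesis
    unfolding funpow_congruence
    by (rule bounded_bilinear_bounded_range[OF bounded_bilinear_matrix_matrix_mult
          _ bounded_range_matpow[OF assms]])
qed

lemma banach_limit_telescoping:
  assumes "banach_limit L" and s: "bounded (range s)"
  shows "L (\<lambda>n. c + (s (Suc n) - s n)) = c"
proof -
  have lin: "\<And>x y a b. bounded (range x) \<Longrightarrow> bounded (range y) \<Longrightarrow>
              L (\<lambda>n. a * x n + b * y n) = a * L x + b * L y"
    and lim: "\<And>x. convergent x \<Longrightarrow> L x = lim x"
    and shift: "\<And>x. bounded (range x) \<Longrightarrow> L (\<lambda>n. x (Suc n)) = L x"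
    using assms(1) unfolding banach_limit_def by blast+
  have s_Suc: "bounded (range (\<lambda>n. s (Suc n)))"
    using s by (rule bounded_range_Suc)
  have d: "bounded (range (\<lambda>n. s (Suc n) - s n))"
    using bounded_minus_comp[OF s_Suc s] .
  have const: "bounded (range (\<lambda>n::nat. c))"
    by (rule boundedI[of _ "norm c"]) auto
  have "L (\<lambda>n. s (Suc n) - s n) = L (\<lambda>n. 1 * s (Suc n) + (-1) * s n)"
    by simp
  also have "\<dots> = 1 * L (\<lambda>n. s (Suc n)) + (-1) * L s"
    by (rule lin[OF s_Suc s])
  also have "\<dots> = 0"
    using shift[OF s] by simp
  finally have "L (\<lambda>n. s (Suc n) - s n) = 0" .
  moreover have "L (\<lambda>n. c) = c"
    using lim[OF convergent_const] by simp
  moreover have "L (\<lambda>n. c + (s (Suc n) - s n)) = 1 * L (\<lambda>n. c) + 1 * L (\<lambda>n. s (Suc n) - s n)"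
    using lin[OF const d, of 1 1] by simp
  ultimately show ?thesis
    by simp
qed

lemma power_bounded_imp_cesaro_tendsto_banach_limit:
  fixes T :: "complex^'n^'n"
  assumes "power_bounded T"
  shows "\<exists>A. cesaro T \<longlonglongrightarrow> A \<and>
           (\<forall>L. banach_limit L \<longrightarrow>
              (\<forall>x y. L (\<lambda>n. cinner ((adj (matpow T n) ** matpow T n) *v x) y) = cinner (A *v x) y))"
proof -
  let ?\<Phi> = "congruence T"
  have lin: "linear ?\<Phi>"
    using bounded_linear_congruence by (rule bounded_linear.linear)
  obtain u w where fixed: "?\<Phi> u = u" and decomp: "mat 1 = u + (?\<Phi> w - w)"
    using mean_ergodic_decomposition[OF lin bounded_orbit_congruence[OF assms]] .
  have "cesaro T \<longlonglongrightarrow> u"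
    unfolding cesaro_eq_cesaro_mean decomp
    by (rule cesaro_mean_coboundary_tendsto[OF lin fixed bounded_orbit_congruence[OF assms]])
  moreover have "L (\<lambda>n. cinner ((adj (matpow T n) ** matpow T n) *v x) y) = cinner (u *v x) y"
    if "banach_limit L" for L x y
  proof -
    define f where "f X = cinner (X *v x) y" for X :: "complex^'n^'n"
    have f: "bounded_linear f"
      unfolding f_def
      by (rule bounded_linear_compose[OF bounded_bilinear.bounded_linear_left[OF bounded_bilinear_cinner]
            bounded_bilinear.bounded_linear_left[OF bounded_bilinear_matrix_vector_mult]])
    have "adj (matpow T n) ** matpow T n = u + ((?\<Phi> ^^ Suc n) w - (?\<Phi> ^^ n) w)" for n
      using funpow_fixed_plus_coboundary[OF lin fixed, of n w]
      by (simp only: funpow_congruence decomp[symmetric] matrix_mul_rid)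
    then have eq: "(\<lambda>n. cinner ((adj (matpow T n) ** matpow T n) *v x) y)
        = (\<lambda>n. f u + (f ((?\<Phi> ^^ Suc n) w) - f ((?\<Phi> ^^ n) w)))"
      by (simp add: fun_eq_iff f_def[symmetric] linear_add[OF bounded_linear.linear[OF f]]
          linear_diff[OF bounded_linear.linear[OF f]])
    have "bounded (range (\<lambda>n. f ((?\<Phi> ^^ n) w)))"
      using bounded_linear_image[OF bounded_orbit_congruence[OF assms] f] by (simp add: image_image)
    then show ?thesis
      unfolding eq using banach_limit_telescoping[OF that] by (simp only: f_def)
  qed
  ultimately show ?thesis
    by blast
qed

section \<open>Convergent Cesaro means force power boundedness\<close>

lemma ex_le_of_sum_le_card_mult:
  fixes f :: "'a \<Rightarrow> real"
  assumes "finite A" and "A \<noteq> {}" and "sum f A \<le> real (card A) * c"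
  shows "\<exists>a\<in>A. f a \<le> c"
proof (rule ccontr)
  assume "\<not> ?thesis"
  then have "(\<Sum>a\<in>A. c) < sum f A"
    using assms(1,2) by (intro sum_strict_mono) auto
  then show False
    using assms(3) by simp
qed

lemma bounded_at_return_times:
  fixes f :: "nat \<Rightarrow> real"
  assumes "m \<ge> 1" and "0 \<le> a" and "0 \<le> f 0"
    and step: "\<And>k. \<exists>j\<in>{1..m}. f (j + k) \<le> f k / 2 + a"
  shows "\<exists>k\<le>t. t < k + m \<and> f k \<le> f 0 + 2 * a"
proof (induction t)
  case 0
  show ?case
    using assms(1,2) by (intro exI[of _ 0]) simp
next
  case (Suc t)
  then obtain k where k: "k \<le> t" "t < k + m" "f k \<le> f 0 + 2 * a"
    by blast
  show ?case
  proof (cases "Suc t < k + m")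
    case True
    then show ?thesis
      using k by (intro exI[of _ k]) simp
  next
    case False
    obtain j where "j \<in> {1..m}" and "f (j + k) \<le> f k / 2 + a"
      using step by blast
    then show ?thesis
      using False k assms(2,3) by (intro exI[of _ "j + k"]) auto
  qed
qed

lemma power_boundedI:
  assumes "\<And>t x. norm (matpow T t *v x) \<le> C * norm x"
  shows "power_bounded T"
  unfolding power_bounded_def
proof (rule bdd_aboveI2)
  show "onorm (\<lambda>x. matpow T t *v x) \<le> C" for t
    by (rule onorm_le) (rule assms)
qed

lemma power_bounded_if_averaged_contraction:
  fixes T :: "complex^'n^'n" and Q :: "complex^'n \<Rightarrow> real"
  assumes "m \<ge> 1" and "0 \<le> c"
    and avg: "\<And>y. (\<Sum>j=1..m. (norm (matpow T j *v y))\<^sup>2) \<le> real m * ((norm y)\<^sup>2 / 2 + Q y)"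
    and invariant: "\<And>k y. Q (matpow T k *v y) = Q y"
    and bound: "\<And>y. Q y \<le> c * (norm y)\<^sup>2"
  shows "power_bounded T"
proof (rule power_boundedI)
  \<comment> \<open>The orbit returns below a fixed level within every m steps, and in fewer than m steps
    it grows by at most the factor D.\<close>
  define D where "D = (\<Sum>r<m. onorm (\<lambda>x. matpow T r *v x))"
  fix t x
  define f where "f k = (norm (matpow T k *v x))\<^sup>2" for k
  have "\<exists>j\<in>{1..m}. f (j + k) \<le> f k / 2 + c * (norm x)\<^sup>2" for k
  proof (rule ex_le_of_sum_le_card_mult)
    have "(\<Sum>j=1..m. f (j + k)) \<le> real m * (f k / 2 + Q x)"
      using avg[of "matpow T k *v x"]
      by (simp add: f_def invariant matrix_vector_mul_assoc matpow_add)
    also have "\<dots> \<le> real m * (f k / 2 + c * (norm x)\<^sup>2)"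
      using bound[of x] by (intro mult_left_mono) auto
    finally show "(\<Sum>j=1..m. f (j + k)) \<le> real (card {1..m}) * (f k / 2 + c * (norm x)\<^sup>2)"
      by simp
  qed (use \<open>m \<ge> 1\<close> in auto)
  then obtain k where k: "k \<le> t" "t < k + m" and "f k \<le> f 0 + 2 * (c * (norm x)\<^sup>2)"
    using bounded_at_return_times[OF \<open>m \<ge> 1\<close>, of "c * (norm x)\<^sup>2" f t] \<open>0 \<le> c\<close>
    by (auto simp: f_def)
  then have "norm (matpow T k *v x) \<le> sqrt ((1 + 2 * c) * (norm x)\<^sup>2)"
    by (intro real_le_rsqrt) (simp add: f_def algebra_simps)
  then have k_bound: "norm (matpow T k *v x) \<le> sqrt (1 + 2 * c) * norm x"
    by (simp add: real_sqrt_mult)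
  have "norm (matpow T t *v x) = norm (matpow T (t - k) *v (matpow T k *v x))"
    using k(1) by (simp add: matrix_vector_mul_assoc matpow_add[symmetric])
  also have "\<dots> \<le> onorm (\<lambda>x. matpow T (t - k) *v x) * norm (matpow T k *v x)"
    by (rule onorm[OF matrix_vector_mul_bounded_linear])
  also have "\<dots> \<le> D * (sqrt (1 + 2 * c) * norm x)"
  proof (rule mult_mono)
    show "onorm (\<lambda>x. matpow T (t - k) *v x) \<le> D"
      unfolding D_def using k
      by (intro member_le_sum onorm_pos_le[OF matrix_vector_mul_bounded_linear]) auto
  qed (use k_bound in \<open>simp_all add: D_def sum_nonneg onorm_pos_le\<close>)
  finally show "norm (matpow T t *v x) \<le> D * sqrt (1 + 2 * c) * norm x"
    by (simp add: mult.assoc)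
qed

lemma cinner_adj: "cinner (adj M *v z) w = cinner z (M *v w)"
proof -
  have "cinner (adj M *v z) w = (\<Sum>i\<in>UNIV. \<Sum>j\<in>UNIV. cnj (M $ j $ i) * z $ j * cnj (w $ i))"
    by (simp add: cinner_def adj_def matrix_vector_mult_def sum_distrib_right)
  also have "\<dots> = (\<Sum>j\<in>UNIV. \<Sum>i\<in>UNIV. cnj (M $ j $ i) * z $ j * cnj (w $ i))"
    by (rule sum.swap)
  also have "\<dots> = cinner z (M *v w)"
    by (simp add: cinner_def matrix_vector_mult_def sum_distrib_left mult_ac)
  finally show ?thesis .
qed

lemma cinner_self: "cinner z z = complex_of_real ((norm z)\<^sup>2)"
proof -
  have norm_sq: "(norm z)\<^sup>2 = (\<Sum>i\<in>UNIV. (cmod (z $ i))\<^sup>2)"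
    by (simp add: norm_vec_def L2_set_def sum_nonneg)
  show ?thesis
    unfolding norm_sq cinner_def of_real_sum
    by (rule sum.cong[OF refl]) (rule complex_norm_square[symmetric])
qed

definition quad_form :: "complex^'n^'n \<Rightarrow> complex^'n \<Rightarrow> real" where
  "quad_form M y = Re (cinner (M *v y) y)"

lemma quad_form_diff: "quad_form (M - N) y = quad_form M y - quad_form N y"
  by (simp add: quad_form_def bounded_bilinear.diff_left[OF bounded_bilinear_matrix_vector_mult]
      bounded_bilinear.diff_left[OF bounded_bilinear_cinner])

lemma quad_form_bound:
  obtains K where "K > 0" and "\<And>(M::complex^'n^'n) y. \<bar>quad_form M y\<bar> \<le> K * norm M * (norm y)\<^sup>2"
proof -
  obtain Kv where "Kv > 0" and Kv: "\<And>(M::complex^'n^'n) y. norm (M *v y) \<le> norm M * norm y * Kv"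
    using bounded_bilinear.pos_bounded[OF bounded_bilinear_matrix_vector_mult] by blast
  obtain Kc where "Kc > 0" and Kc: "\<And>(z::complex^'n) y. norm (cinner z y) \<le> norm z * norm y * Kc"
    using bounded_bilinear.pos_bounded[OF bounded_bilinear_cinner] by blast
  have "\<bar>quad_form M y\<bar> \<le> (Kc * Kv) * norm M * (norm y)\<^sup>2" for M :: "complex^'n^'n" and y
  proof -
    have "\<bar>quad_form M y\<bar> \<le> norm (M *v y) * norm y * Kc"
      unfolding quad_form_def using abs_Re_le_cmod order_trans Kc by blast
    also have "\<dots> \<le> (norm M * norm y * Kv) * norm y * Kc"
      using Kv \<open>Kc > 0\<close> by (intro mult_right_mono) auto
    finally show ?thesis
      by (simp add: power2_eq_square mult_ac)
  qed
  moreover have "Kc * Kv > 0"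
    using \<open>Kc > 0\<close> \<open>Kv > 0\<close> by simp
  ultimately show ?thesis
    using that by blast
qed

lemma quad_form_congruence: "quad_form (congruence T A) y = quad_form A (T *v y)"
  by (simp add: quad_form_def congruence_def matrix_vector_mul_assoc[symmetric] cinner_adj)

lemma quad_form_cesaro:
  fixes T :: "complex^'n^'n"
  shows "quad_form (cesaro T n) y = (1 / real n) * (\<Sum>j=1..n. (norm (matpow T j *v y))\<^sup>2)"
proof -
  have "quad_form (adj M ** M) y = (norm (M *v y))\<^sup>2" for M :: "complex^'n^'n"
    using quad_form_congruence[of M "mat 1" y]
    by (simp add: congruence_def quad_form_def cinner_self)
  then show ?thesis
    unfolding cesaro_def quad_form_def
    by (simp add: bounded_bilinear.scaleR_left[OF bounded_bilinear_matrix_vector_mult]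
        bounded_bilinear.sum_left[OF bounded_bilinear_matrix_vector_mult]
        bounded_bilinear.scaleR_left[OF bounded_bilinear_cinner]
        bounded_bilinear.sum_left[OF bounded_bilinear_cinner] Re_sum)
qed

lemma power_bounded_if_cesaro_tendsto:
  fixes T :: "complex^'n^'n"
  assumes lim: "cesaro T \<longlonglongrightarrow> A"
  shows "power_bounded T"
proof -
  have "congruence T A = A"
    using lim unfolding cesaro_eq_cesaro_mean
    by (intro cesaro_mean_cluster_point_fixed[OF bounded_linear_congruence
          cesaro_mean_tendsto_imp_orbit_over_n_tendsto_zero strict_mono_id]) simp_all
  then have "(congruence T ^^ k) A = A" for k
    by (induction k) simp_all
  then have invariant: "quad_form A (matpow T k *v y) = quad_form A y" for k y
    using quad_form_congruence[of "matpow T k" A y]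
    by (simp add: congruence_def funpow_congruence)
  obtain K where "K > 0" and K: "\<And>(M::complex^'n^'n) y. \<bar>quad_form M y\<bar> \<le> K * norm M * (norm y)\<^sup>2"
    using quad_form_bound by blast
  have "(\<lambda>n. K * norm (cesaro T n - A)) \<longlonglongrightarrow> K * 0"
    using lim by (intro tendsto_mult tendsto_const tendsto_norm_zero) (simp add: LIM_zero)
  then have "\<forall>\<^sub>F n in sequentially. K * norm (cesaro T n - A) < 1/2 \<and> n \<ge> 1"
    by (intro eventually_conj order_tendstoD(2) eventually_ge_at_top) auto
  then obtain m where "m \<ge> 1" and close: "K * norm (cesaro T m - A) < 1/2"
    unfolding eventually_sequentially by (meson order_refl)
  have "(\<Sum>j=1..m. (norm (matpow T j *v y))\<^sup>2) \<le> real m * ((norm y)\<^sup>2 / 2 + quad_form A y)" for y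
  proof -
    have "quad_form (cesaro T m) y = quad_form A y + quad_form (cesaro T m - A) y"
      by (simp add: quad_form_diff)
    also have "\<dots> \<le> quad_form A y + (norm y)\<^sup>2 / 2"
    proof -
      have "K * norm (cesaro T m - A) * (norm y)\<^sup>2 \<le> 1/2 * (norm y)\<^sup>2"
        using close by (intro mult_right_mono) auto
      then show ?thesis
        using K[of "cesaro T m - A" y] by linarith
    qed
    finally show ?thesis
      using \<open>m \<ge> 1\<close> by (simp add: quad_form_cesaro field_simps)
  qed
  moreover have "quad_form A y \<le> (K * norm A) * (norm y)\<^sup>2" for y
    using K[of A y] by simp
  ultimately show ?thesis
    using \<open>m \<ge> 1\<close> \<open>K > 0\<close> invariant
    by (intro power_bounded_if_averaged_contraction[of m "K * norm A" T "quad_form A"]) auto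
qed

theorem mainTheorem6:
  fixes T :: "complex ^'n^'n"
  shows "(power_bounded T \<longrightarrow>
            (\<exists>A. cesaro T \<longlonglongrightarrow> A \<and>
                 (\<forall>L. banach_limit L \<longrightarrow>
                    (\<forall>x y. L (\<lambda>n. cinner ((adj (matpow T n) ** matpow T n) *v x) y)
                           = cinner (A *v x) y))))
       \<and> (convergent (cesaro T) \<longrightarrow> power_bounded T)"
  using power_bounded_imp_cesaro_tendsto_banach_limit power_bounded_if_cesaro_tendsto
  unfolding convergent_def by blast

end
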